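(* Let $Q$ be a quantum circuit acting on $w$ qubits and let $k$ be a positive integer with $k\le w$. Let $R$ be the circuit on $w+1$ qubits, divided into a single-qubit register $\mathsf{O}$ (the first qubit), a $k$-qubit register $\mathsf{Q}$ (whose first qubit is denoted $\mathsf{Q}^{(1)}$) and a $(w-k)$-qubit register $\mathsf{R}$, that performs in order: (1) the $k$-controlled Hadamard $C^k(H)$ with controls $\mathsf{Q}$ and target $\mathsf{O}$, followed by $X$ on each qubit of $\mathsf{Q}$; (2) $Q$ on $(\mathsf{Q},\mathsf{R})$; (3) the controlled-$Z$ on $(\mathsf{O},\mathsf{Q}^{(1)})$; (4) $Q^\dagger$ on $(\mathsf{Q},\mathsf{R})$; (5) $X$ on each qubit of $\mathsf{Q}$, followed by $C^k(H)$ with controls $\mathsf{Q}$ and target $\mathsf{O}$; with $\mathsf{O}$ as output qubit. Then \[1-2^{-k}\bigl(1-(p_{\mathrm{acc}}(Q,k))^2\bigr)\le p_{\mathrm{acc}}(R,1)\le 1-2^{-k}\bigl(1-p_{\mathrm{acc}}(Q,k)\bigr).\]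
   Context: For a circuit $Q$ on $w$ qubits and $1\le k\le w$, $p_{\mathrm{acc}}(Q,k)=\mathrm{tr}\,\Pi_{\mathrm{acc}}Q\rho^{(w,k)}_{\mathrm{init}}Q^\dagger$, where $\rho^{(w,k)}_{\mathrm{init}}=(|0\rangle\langle0|)^{\otimes k}\otimes(I/2)^{\otimes(w-k)}$ and $\Pi_{\mathrm{acc}}=|0\rangle\langle0|\otimes I^{\otimes(w-1)}$; i.e., the first $k$ qubits start clean, the rest maximally mixed, and acceptance means the first qubit is measured as $0$. In $R$, the ordering of qubits is $\mathsf{O},\mathsf{Q},\mathsf{R}$, and $Q$ acting on $(\mathsf{Q},\mathsf{R})$ uses the qubits of $\mathsf{Q}$ as its first $k$ qubits. $C^k(H)$ applies the Hadamard gate to the target iff all $k$ control qubits are $1$; $X$ is the NOT gate and controlled-$Z$ multiplies the phase by $-1$ iff both qubits are $1$. *)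

theory Defs
  imports Complex_Main "Jordan_Normal_Form.Matrix"
begin

text \<open>A state/operator on n qubits is a 2^n x 2^n complex matrix. Basis index x < 2^n
  encodes the bit string of the qubits, qubit 0 (the first qubit) being the most significant bit,
  i.e. the usual tensor-product (Kronecker) ordering.\<close>

definition qbit :: "nat \<Rightarrow> nat \<Rightarrow> nat \<Rightarrow> nat" where
  "qbit n x j = (x div 2 ^ (n - 1 - j)) mod 2"

definition adj :: "complex mat \<Rightarrow> complex mat" where
  "adj A = mat (dim_col A) (dim_row A) (\<lambda>(i,j). cnj (A $$ (j,i)))"

definition unitary :: "nat \<Rightarrow> complex mat \<Rightarrow> bool" where
  "unitary n U \<longleftrightarrow> U \<in> carrier_mat n n \<and> adj U * U = 1\<^sub>m n \<and> U * adj U = 1\<^sub>m n"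

definition mtrace :: "complex mat \<Rightarrow> complex" where
  "mtrace A = (\<Sum>i<dim_row A. A $$ (i,i))"

text \<open>Kronecker (tensor) product; the left factor acts on the first qubits.\<close>
definition kron :: "complex mat \<Rightarrow> complex mat \<Rightarrow> complex mat" where
  "kron A B = mat (dim_row A * dim_row B) (dim_col A * dim_col B)
     (\<lambda>(i,j). A $$ (i div dim_row B, j div dim_col B) * B $$ (i mod dim_row B, j mod dim_col B))"

fun kron_pow :: "complex mat \<Rightarrow> nat \<Rightarrow> complex mat" where
  "kron_pow A 0 = 1\<^sub>m 1"
| "kron_pow A (Suc n) = kron A (kron_pow A n)"

text \<open>Initial state: first k qubits |0>, remaining w-k qubits maximally mixed.\<close>
definition rho_init :: "nat \<Rightarrow> nat \<Rightarrow> complex mat" where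
  "rho_init w k = mat (2^w) (2^w) (\<lambda>(x,y).
     if x = y \<and> (\<forall>j<k. qbit w x j = 0) then 1 / 2 ^ (w - k) else 0)"

definition Pi_acc :: "nat \<Rightarrow> complex mat" where
  "Pi_acc w = mat (2^w) (2^w) (\<lambda>(x,y). if x = y \<and> qbit w x 0 = 0 then 1 else 0)"

definition p_acc :: "nat \<Rightarrow> complex mat \<Rightarrow> nat \<Rightarrow> real" where
  "p_acc w Q k = Re (mtrace (Pi_acc w * Q * rho_init w k * adj Q))"

definition hadamard :: "complex mat" where
  "hadamard = mat 2 2 (\<lambda>(i,j). if i = 1 \<and> j = 1 then - complex_of_real (1 / sqrt 2) else complex_of_real (1 / sqrt 2))"

definition pauli_X :: "complex mat" where
  "pauli_X = mat 2 2 (\<lambda>(i,j). if i \<noteq> j then 1 else 0)"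

definition proj_ones :: "nat \<Rightarrow> complex mat" where
  "proj_ones k = mat (2^k) (2^k) (\<lambda>(x,y). if x = y \<and> (\<forall>j<k. qbit k x j = 1) then 1 else 0)"

definition CkH :: "nat \<Rightarrow> nat \<Rightarrow> complex mat" where
  "CkH w k = kron hadamard (kron (proj_ones k) (1\<^sub>m (2^(w-k))))
           + kron (1\<^sub>m 2) (kron (1\<^sub>m (2^k) - proj_ones k) (1\<^sub>m (2^(w-k))))"

definition X_Q :: "nat \<Rightarrow> nat \<Rightarrow> complex mat" where
  "X_Q w k = kron (1\<^sub>m 2) (kron (kron_pow pauli_X k) (1\<^sub>m (2^(w-k))))"

text \<open>Controlled-Z on qubits O (qubit 0) and Q^(1) (qubit 1) of the w+1 qubits.\<close>
definition CZ_OQ1 :: "nat \<Rightarrow> complex mat" where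
  "CZ_OQ1 w = mat (2^(w+1)) (2^(w+1)) (\<lambda>(x,y).
     if x = y then (if qbit (w+1) x 0 = 1 \<and> qbit (w+1) x 1 = 1 then - 1 else 1) else 0)"

text \<open>The circuit R (later gates multiply on the left).\<close>
definition circuit_R :: "nat \<Rightarrow> nat \<Rightarrow> complex mat \<Rightarrow> complex mat" where
  "circuit_R w k Q =
     (CkH w k * X_Q w k) * kron (1\<^sub>m 2) (adj Q) * CZ_OQ1 w * kron (1\<^sub>m 2) Q * (X_Q w k * CkH w k)"

end

theory Submission
  imports Defs "HOL-Analysis.Convex"
begin

text \<open>Conjugating by X on every qubit of Q turns the controls of C^k(H) into the condition that Q
  starts clean. On the corner block where O starts and ends in |0>, the circuit R is therefore the
  identity on inputs whose Q register is not clean, while between clean inputs |r> and |s> its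
  entry is the average of the two diagonal blocks of CZ conjugated by Q, namely
  \<Gamma>_rs = <r| Q^\<dagger> \<Pi>_acc Q |s>. Hence
  p_acc(R,1) = 1 - 2^-k + 2^-w \<Sum>_{r,s < 2^(w-k)} |\<Gamma>_rs|^2, whereas p_acc(Q,k) is the mean of
  \<Gamma>_rr over r < 2^(w-k). Since \<Gamma> is an orthogonal projection,
  \<Gamma>_rr^2 \<le> \<Sum>_s |\<Gamma>_rs|^2 \<le> \<Gamma>_rr; this gives the upper bound directly and the lower
  bound after Cauchy-Schwarz.\<close>

lemma pow2_split: "k \<le> w \<Longrightarrow> (2::nat) ^ k * 2 ^ (w - k) = 2 ^ w"
  by (simp flip: power_add)

lemma sum_lessThan_restrict:
  fixes f :: "nat \<Rightarrow> 'a::comm_monoid_add"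
  assumes "n \<le> m"
  shows "(\<Sum>i<m. if i < n then f i else 0) = (\<Sum>i<n. f i)"
proof -
  have "{i \<in> {..<m}. i < n} = {..<n}" using assms by auto
  then show ?thesis using sum.inter_filter[of "{..<m}" f "\<lambda>i. i < n"] by simp
qed

lemma sum_lessThan_double:
  fixes f :: "nat \<Rightarrow> 'a::comm_monoid_add"
  shows "(\<Sum>l<2*n. f l) = (\<Sum>l<n. f l) + (\<Sum>l<n. f (n + l))"
proof -
  have "(\<Sum>l<2*n. f l) = (\<Sum>l\<in>{0..<n}. f l) + (\<Sum>l\<in>{n..<2*n}. f l)"
    by (simp add: lessThan_atLeast0 sum.atLeastLessThan_concat)
  also have "(\<Sum>l\<in>{n..<2*n}. f l) = (\<Sum>l\<in>{0..<n}. f (l + n))"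
    using sum.shift_bounds_nat_ivl[of f 0 n n] by (simp add: mult_2)
  finally show ?thesis by (simp add: lessThan_atLeast0 add.commute)
qed

lemma qbit_prefix_zero_iff:
  assumes "x < 2^n" "k \<le> n"
  shows "(\<forall>j<k. qbit n x j = 0) \<longleftrightarrow> x < 2^(n-k)"
  using assms(2)
proof (induction k)
  case 0
  then show ?case using assms(1) by simp
next
  case (Suc k)
  define m where "m = n - 1 - k"
  have nk: "n - k = Suc m" and nk': "n - Suc k = m" using Suc.prems m_def by simp_all
  have "(\<forall>j<Suc k. qbit n x j = 0) \<longleftrightarrow> (\<forall>j<k. qbit n x j = 0) \<and> qbit n x k = 0"
    using less_Suc_eq by auto
  also have "\<dots> \<longleftrightarrow> x < 2^Suc m \<and> (x div 2^m) mod 2 = 0"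
    using Suc by (simp add: nk qbit_def m_def)
  also have "\<dots> \<longleftrightarrow> x < 2^m"
  proof
    assume a: "x < 2^Suc m \<and> (x div 2^m) mod 2 = 0"
    then have "x div 2^m < 2" by (simp add: less_mult_imp_div_less)
    with a have "x div 2^m = 0" by (metis mod_less)
    then show "x < 2^m" by (simp add: div_eq_0_iff)
  qed simp
  finally show ?case by (simp add: nk')
qed

lemma qbit_first_zero_iff: "x < 2^(w+1) \<Longrightarrow> qbit (w+1) x 0 = 0 \<longleftrightarrow> x < 2^w"
  using qbit_prefix_zero_iff[of x "w+1" 1] by simp

lemma qbit_all_one_iff:
  assumes "x < 2^k"
  shows "(\<forall>j<k. qbit k x j = 1) \<longleftrightarrow> x = 2^k - 1"
proof -
  have "(\<forall>j<k. qbit k x j = 1) \<longleftrightarrow> (\<forall>j<k. bit x (k - 1 - j))"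
    by (simp add: qbit_def bit_iff_odd odd_iff_mod_2_eq_one)
  also have "\<dots> \<longleftrightarrow> (\<forall>p<k. bit x p)"
  proof (intro iffI allI impI)
    fix p assume h: "\<forall>j<k. bit x (k - 1 - j)" and "p < k"
    then have "k - 1 - (k - 1 - p) = p" "k - 1 - p < k" by auto
    then show "bit x p" using h by metis
  next
    fix j assume "\<forall>p<k. bit x p" and "j < k"
    then show "bit x (k - 1 - j)" by (simp add: less_imp_diff_less)
  qed
  also have "\<dots> \<longleftrightarrow> x = mask k"
  proof
    assume h: "\<forall>p<k. bit x p"
    show "x = mask k"
    proof (rule bit_eqI)
      fix p
      have "bit x p \<longleftrightarrow> p < k \<and> bit x p"
        using assms by (metis bit_take_bit_iff take_bit_nat_eq_self)
      then show "bit x p \<longleftrightarrow> bit (mask k :: nat) p" using h by (auto simp: bit_mask_iff)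
    qed
  qed (simp add: bit_mask_iff)
  finally show ?thesis by (simp add: mask_eq_exp_minus_1)
qed

lemma qbit_upper_block:
  assumes "1 \<le> w" "a < 2" "i < 2^w"
  shows "qbit (w+1) (a*2^w+i) 0 = a" "qbit (w+1) (a*2^w+i) 1 = (if 2^(w-1) \<le> i then 1 else 0)"
proof -
  show "qbit (w+1) (a*2^w+i) 0 = a" unfolding qbit_def using assms(2,3) by simp
  let ?h = "2^(w-1) :: nat"
  have N: "(2::nat)^w = 2 * ?h" using assms(1) by (simp flip: power_Suc)
  have "i div ?h < 2" using assms(3) N by (simp add: less_mult_imp_div_less)
  then have "i div ?h = (if ?h \<le> i then 1 else 0)"
    using div_eq_0_iff[of i ?h] by (auto simp: not_less)
  moreover have "(a*2^w+i) div ?h = 2*a + i div ?h"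
  proof -
    have e: "a*2^w+i = i + (2*a)*?h" using N by simp
    show ?thesis unfolding e by simp
  qed
  ultimately show "qbit (w+1) (a*2^w+i) 1 = (if 2^(w-1) \<le> i then 1 else 0)"
    unfolding qbit_def by simp
qed

text \<open>Complementing the leading base-K digit of i = q L + r; for K = 2^k and L = 2^(w-k) this is
  the basis permutation by which X acts on each of the first k qubits.\<close>
definition compl_high :: "nat \<Rightarrow> nat \<Rightarrow> nat \<Rightarrow> nat" where
  "compl_high K L i = (K - 1 - i div L) * L + i mod L"

lemma compl_high_div_mod:
  assumes "i < K * L"
  shows "compl_high K L i div L = K - 1 - i div L" "compl_high K L i mod L = i mod L"
  using assms unfolding compl_high_def by (cases "L = 0"; simp)+

lemma compl_high_less:
  assumes "i < K * L"
  shows "compl_high K L i < K * L"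
proof -
  have "i div L < K" using assms by (simp add: less_mult_imp_div_less)
  then have "(K - 1 - i div L + 1) * L \<le> K * L" by (intro mult_le_mono1) linarith
  then have "(K - 1 - i div L) * L + L \<le> K * L" by (simp add: distrib_right)
  moreover have "i mod L < L" using assms by (cases "L = 0") auto
  ultimately show ?thesis unfolding compl_high_def by linarith
qed

lemma compl_high_involutive:
  assumes "i < K * L"
  shows "compl_high K L (compl_high K L i) = i"
proof -
  have "i div L < K" using assms by (simp add: less_mult_imp_div_less)
  then have "K - 1 - (K - 1 - i div L) = i div L" by simp
  then show ?thesis
    unfolding compl_high_def[of K L "compl_high K L i"] compl_high_div_mod[OF assms] by simp
qed

lemma compl_high_iff:
  assumes "i < K * L" "j < K * L"
  shows "(i div L + j div L = K - 1 \<and> i mod L = j mod L) \<longleftrightarrow> j = compl_high K L i"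
proof
  assume h: "i div L + j div L = K - 1 \<and> i mod L = j mod L"
  then have "j div L = K - 1 - i div L" by linarith
  then show "j = compl_high K L i" unfolding compl_high_def using h by (metis div_mult_mod_eq)
next
  assume "j = compl_high K L i"
  moreover have "i div L < K" using assms by (simp add: less_mult_imp_div_less)
  ultimately show "i div L + j div L = K - 1 \<and> i mod L = j mod L"
    using compl_high_div_mod[OF assms(1)] by simp
qed

lemma index_mult_mat_sum:
  assumes "A \<in> carrier_mat n m" "B \<in> carrier_mat m p" "i < n" "j < p"
  shows "(A * B) $$ (i,j) = (\<Sum>l<m. A $$ (i,l) * B $$ (l,j))"
  using assms by (simp add: scalar_prod_def lessThan_atLeast0)

lemma kron_dims [simp]:
  "dim_row (kron A B) = dim_row A * dim_row B" "dim_col (kron A B) = dim_col A * dim_col B"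
  unfolding kron_def by simp_all

lemma kron_carrier_mat:
  "A \<in> carrier_mat a b \<Longrightarrow> B \<in> carrier_mat c d \<Longrightarrow> kron A B \<in> carrier_mat (a*c) (b*d)"
  unfolding carrier_mat_def by simp

lemma index_kron:
  "i < dim_row A * dim_row B \<Longrightarrow> j < dim_col A * dim_col B \<Longrightarrow>
   kron A B $$ (i,j) = A $$ (i div dim_row B, j div dim_col B) * B $$ (i mod dim_row B, j mod dim_col B)"
  unfolding kron_def by simp

lemma index_kron_block:
  assumes "A \<in> carrier_mat p q" "B \<in> carrier_mat n m" "a < p" "b < q" "i < n" "j < m"
  shows "kron A B $$ (a*n+i, b*m+j) = A $$ (a,b) * B $$ (i,j)"
proof -
  have "a*n+i < p*n" using mult_le_mono1[of "Suc a" p n] assms(3,5) by simp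
  moreover have "b*m+j < q*m" using mult_le_mono1[of "Suc b" q m] assms(4,6) by simp
  ultimately show ?thesis using assms by (simp add: index_kron)
qed

lemma index_kron_id_right:
  assumes "A \<in> carrier_mat K K'" "i < K*L" "j < K'*L"
  shows "kron A (1\<^sub>m L) $$ (i,j) = (if i mod L = j mod L then A $$ (i div L, j div L) else 0)"
proof -
  have "L > 0" using assms(2) by (cases L) auto
  then show ?thesis using assms by (simp add: index_kron)
qed

lemma adj_carrier_mat: "Q \<in> carrier_mat n n \<Longrightarrow> adj Q \<in> carrier_mat n n"
  unfolding adj_def carrier_mat_def by simp

lemma index_adj: "Q \<in> carrier_mat n n \<Longrightarrow> i < n \<Longrightarrow> j < n \<Longrightarrow> adj Q $$ (i,j) = cnj (Q $$ (j,i))"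
  unfolding adj_def carrier_mat_def by simp

lemma unitary_columns_orthonormal:
  assumes "unitary n Q" "r < n" "s < n"
  shows "(\<Sum>m<n. cnj (Q $$ (m,r)) * Q $$ (m,s)) = (if r = s then 1 else 0)"
proof -
  have Q: "Q \<in> carrier_mat n n" and "adj Q * Q = 1\<^sub>m n" using assms(1) unfolding unitary_def by auto
  then have "(adj Q * Q) $$ (r,s) = (if r = s then 1 else 0)" using assms by simp
  then show ?thesis
    using assms by (simp add: index_mult_mat_sum[OF adj_carrier_mat[OF Q] Q] index_adj[OF Q])
qed

lemma unitary_rows_orthonormal:
  assumes "unitary n Q" "m < n" "m' < n"
  shows "(\<Sum>s<n. Q $$ (m,s) * cnj (Q $$ (m',s))) = (if m = m' then 1 else 0)"
proof -
  have Q: "Q \<in> carrier_mat n n" and "Q * adj Q = 1\<^sub>m n" using assms(1) unfolding unitary_def by auto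
  then have "(Q * adj Q) $$ (m,m') = (if m = m' then 1 else 0)" using assms by simp
  then show ?thesis
    using assms by (simp add: index_mult_mat_sum[OF Q adj_carrier_mat[OF Q]] index_adj[OF Q])
qed

definition diag_fun :: "nat \<Rightarrow> (nat \<Rightarrow> complex) \<Rightarrow> complex mat" where
  "diag_fun n d = mat n n (\<lambda>(i,j). if i = j then d i else 0)"

lemma diag_fun_carrier [simp]: "diag_fun n d \<in> carrier_mat n n"
  unfolding diag_fun_def carrier_mat_def by simp

lemma diag_fun_dims [simp]: "dim_row (diag_fun n d) = n" "dim_col (diag_fun n d) = n"
  unfolding diag_fun_def by simp_all

lemma index_diag_fun: "i < n \<Longrightarrow> j < n \<Longrightarrow> diag_fun n d $$ (i,j) = (if i = j then d i else 0)"
  unfolding diag_fun_def by simp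

lemma diag_fun_one: "diag_fun n (\<lambda>_. 1) = 1\<^sub>m n"
  by (rule eq_matI) (auto simp: diag_fun_def)

lemma index_diag_fun_mult:
  assumes "A \<in> carrier_mat n m" "i < n" "j < m"
  shows "(diag_fun n d * A) $$ (i,j) = d i * A $$ (i,j)"
proof -
  have "(diag_fun n d * A) $$ (i,j) = (\<Sum>l<n. diag_fun n d $$ (i,l) * A $$ (l,j))"
    using assms by (intro index_mult_mat_sum) auto
  also have "\<dots> = (\<Sum>l<n. if l = i then d i * A $$ (i,j) else 0)"
    using assms by (intro sum.cong) (auto simp: index_diag_fun)
  finally show ?thesis using assms by simp
qed

lemma index_mult_diag_fun:
  assumes "A \<in> carrier_mat m n" "i < m" "j < n"
  shows "(A * diag_fun n d) $$ (i,j) = A $$ (i,j) * d j"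
proof -
  have "(A * diag_fun n d) $$ (i,j) = (\<Sum>l<n. A $$ (i,l) * diag_fun n d $$ (l,j))"
    using assms by (intro index_mult_mat_sum) auto
  also have "\<dots> = (\<Sum>l<n. if l = j then A $$ (i,j) * d j else 0)"
    using assms by (intro sum.cong) (auto simp: index_diag_fun)
  finally show ?thesis using assms by simp
qed

definition perm_mat :: "nat \<Rightarrow> (nat \<Rightarrow> nat) \<Rightarrow> complex mat" where
  "perm_mat n f = mat n n (\<lambda>(i,j). if j = f i then 1 else 0)"

lemma perm_mat_carrier [simp]: "perm_mat n f \<in> carrier_mat n n"
  unfolding perm_mat_def carrier_mat_def by simp

lemma index_perm_mat_mult:
  assumes "A \<in> carrier_mat n m" "i < n" "j < m" "f i < n"
  shows "(perm_mat n f * A) $$ (i,j) = A $$ (f i, j)"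
proof -
  have "(perm_mat n f * A) $$ (i,j) = (\<Sum>l<n. perm_mat n f $$ (i,l) * A $$ (l,j))"
    using assms by (intro index_mult_mat_sum) auto
  also have "\<dots> = (\<Sum>l<n. if l = f i then A $$ (f i, j) else 0)"
    using assms by (intro sum.cong) (auto simp: perm_mat_def)
  finally show ?thesis using assms by simp
qed

lemma index_mult_perm_mat:
  assumes "A \<in> carrier_mat m n" "i < m" "j < n" and f: "\<And>l. l < n \<Longrightarrow> f l < n \<and> f (f l) = l"
  shows "(A * perm_mat n f) $$ (i,j) = A $$ (i, f j)"
proof -
  have "(A * perm_mat n f) $$ (i,j) = (\<Sum>l<n. A $$ (i,l) * perm_mat n f $$ (l,j))"
    using assms by (intro index_mult_mat_sum) auto
  also have "\<dots> = (\<Sum>l<n. if l = f j then A $$ (i, f j) else 0)"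
  proof (intro sum.cong refl)
    fix l assume "l \<in> {..<n}"
    then have "j = f l \<longleftrightarrow> l = f j" using f[of l] f[of j] assms(3) by auto
    then show "A $$ (i,l) * perm_mat n f $$ (l,j) = (if l = f j then A $$ (i, f j) else 0)"
      using \<open>l \<in> {..<n}\<close> assms(3) by (auto simp: perm_mat_def)
  qed
  finally show ?thesis using assms f[of j] by simp
qed

lemma index_diag_perm_conj:
  assumes M: "M \<in> carrier_mat n n" and ij: "i < n" "j < n"
    and f: "\<And>l. l < n \<Longrightarrow> f l < n \<and> f (f l) = l"
  shows "(((diag_fun n d1 * perm_mat n f) * M) * (perm_mat n f * diag_fun n d2)) $$ (i,j)
       = d1 i * M $$ (f i, f j) * d2 j"
proof -
  let ?D1 = "diag_fun n d1" and ?D2 = "diag_fun n d2" and ?P = "perm_mat n f"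
  have PM: "?P * M \<in> carrier_mat n n" using M by (intro mult_carrier_mat) simp_all
  have "((?D1 * ?P) * M) * (?P * ?D2) = (?D1 * (?P * M)) * (?P * ?D2)"
    by (simp add: assoc_mult_mat[OF diag_fun_carrier perm_mat_carrier M])
  also have "\<dots> = ?D1 * ((?P * M) * (?P * ?D2))"
    by (rule assoc_mult_mat[OF diag_fun_carrier PM mult_carrier_mat[OF perm_mat_carrier diag_fun_carrier]])
  also have "(?P * M) * (?P * ?D2) = ((?P * M) * ?P) * ?D2"
    by (rule assoc_mult_mat[OF PM perm_mat_carrier diag_fun_carrier, symmetric])
  finally have e: "((?D1 * ?P) * M) * (?P * ?D2) = ?D1 * (((?P * M) * ?P) * ?D2)" .
  have PMP: "(?P * M) * ?P \<in> carrier_mat n n" using PM by (rule mult_carrier_mat) simp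
  have "((?P * M) * ?P) $$ (i, j) = M $$ (f i, f j)"
    using index_mult_perm_mat[OF PM ij f] index_perm_mat_mult[OF M ij(1)] f ij by simp
  then show ?thesis
    unfolding e index_diag_fun_mult[OF mult_carrier_mat[OF PMP diag_fun_carrier] ij]
      index_mult_diag_fun[OF PMP ij] by (simp add: mult.assoc)
qed

definition block :: "nat \<Rightarrow> nat \<Rightarrow> nat \<Rightarrow> complex mat \<Rightarrow> complex mat" where
  "block n a b X = mat n n (\<lambda>(i,j). X $$ (a*n+i, b*n+j))"

lemma block_carrier [simp]: "block n a b X \<in> carrier_mat n n"
  unfolding block_def carrier_mat_def by simp

lemma block_dims [simp]: "dim_row (block n a b X) = n" "dim_col (block n a b X) = n"
  unfolding block_def by simp_all

lemma index_block: "i < n \<Longrightarrow> j < n \<Longrightarrow> block n a b X $$ (i,j) = X $$ (a*n+i, b*n+j)"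
  unfolding block_def by simp

lemma block_index_less: "(a::nat) < 2 \<Longrightarrow> i < n \<Longrightarrow> a*n+i < 2*n"
  by (cases a) auto

lemma block_mult:
  assumes "X \<in> carrier_mat (2*n) (2*n)" "Y \<in> carrier_mat (2*n) (2*n)" "a < 2" "b < 2"
  shows "block n a b (X * Y) = block n a 0 X * block n 0 b Y + block n a 1 X * block n 1 b Y"
proof (rule eq_matI)
  fix i j assume "i < dim_row (block n a 0 X * block n 0 b Y + block n a 1 X * block n 1 b Y)"
    "j < dim_col (block n a 0 X * block n 0 b Y + block n a 1 X * block n 1 b Y)"
  then have i: "i < n" and j: "j < n" by auto
  have "block n a b (X * Y) $$ (i,j) = (X * Y) $$ (a*n+i, b*n+j)" by (rule index_block[OF i j])
  also have "\<dots> = (\<Sum>l<2*n. X $$ (a*n+i, l) * Y $$ (l, b*n+j))"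
    using assms i j by (intro index_mult_mat_sum) (auto intro: block_index_less)
  also have "\<dots> = (\<Sum>l<n. X $$ (a*n+i, l) * Y $$ (l, b*n+j))
      + (\<Sum>l<n. X $$ (a*n+i, n+l) * Y $$ (n+l, b*n+j))"
    by (rule sum_lessThan_double)
  also have "(\<Sum>l<n. X $$ (a*n+i, l) * Y $$ (l, b*n+j)) = (block n a 0 X * block n 0 b Y) $$ (i,j)"
    using i j by (subst index_mult_mat_sum[of _ n n]) (auto simp: index_block)
  also have "(\<Sum>l<n. X $$ (a*n+i, n+l) * Y $$ (n+l, b*n+j)) = (block n a 1 X * block n 1 b Y) $$ (i,j)"
    using i j by (subst index_mult_mat_sum[of _ n n]) (auto simp: index_block)
  finally show "block n a b (X * Y) $$ (i,j)
      = (block n a 0 X * block n 0 b Y + block n a 1 X * block n 1 b Y) $$ (i,j)"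
    using i j by simp
qed (auto simp: block_def)

lemma block_mult_block_diag_right:
  assumes "X \<in> carrier_mat (2*n) (2*n)" "Y \<in> carrier_mat (2*n) (2*n)" "a < 2" "b < 2"
    and "block n 0 1 Y = 0\<^sub>m n n" "block n 1 0 Y = 0\<^sub>m n n"
  shows "block n a b (X * Y) = block n a b X * block n b b Y"
proof (cases "b = 0")
  case True
  then show ?thesis
    using block_mult[OF assms(1-4)] assms(6)
    by (simp add: right_add_zero_mat[OF mult_carrier_mat[OF block_carrier block_carrier]])
next
  case False
  then have "b = 1" using assms(4) by simp
  then show ?thesis
    using block_mult[OF assms(1-4)] assms(5)
    by (simp add: left_add_zero_mat[OF mult_carrier_mat[OF block_carrier block_carrier]])
qed

lemma block_mult_block_diag_left:
  assumes "X \<in> carrier_mat (2*n) (2*n)" "Y \<in> carrier_mat (2*n) (2*n)" "a < 2" "b < 2"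
    and "block n 0 1 X = 0\<^sub>m n n" "block n 1 0 X = 0\<^sub>m n n"
  shows "block n a b (X * Y) = block n a a X * block n a b Y"
proof (cases "a = 0")
  case True
  then show ?thesis
    using block_mult[OF assms(1-4)] assms(5)
    by (simp add: right_add_zero_mat[OF mult_carrier_mat[OF block_carrier block_carrier]])
next
  case False
  then have "a = 1" using assms(3) by simp
  then show ?thesis
    using block_mult[OF assms(1-4)] assms(6)
    by (simp add: left_add_zero_mat[OF mult_carrier_mat[OF block_carrier block_carrier]])
qed

lemma block_kron_id2:
  assumes "B \<in> carrier_mat n n" "a < 2" "b < 2"
  shows "block n a b (kron (1\<^sub>m 2) B) = (if a = b then B else 0\<^sub>m n n)"
  by (rule eq_matI)
    (use assms in \<open>auto simp: index_block index_kron_block[of "1\<^sub>m 2" 2 2 B n n]\<close>)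

lemma antidiagonal_double_iff:
  fixes i j K :: nat
  assumes "i < 2*K" "j < 2*K"
  shows "(i div K \<noteq> j div K \<and> i mod K + j mod K = K - 1) \<longleftrightarrow> i + j = 2*K - 1"
proof -
  have "i div K < 2" "j div K < 2" using assms by (simp_all add: less_mult_imp_div_less mult.commute)
  then consider "i div K = 0" "j div K = 0" | "i div K = 0" "j div K = 1"
    | "i div K = 1" "j div K = 0" | "i div K = 1" "j div K = 1"
    by linarith
  moreover have "i = i div K * K + i mod K" "j = j div K * K + j mod K" by simp_all
  moreover have "i mod K < K" "j mod K < K" using assms by simp_all
  ultimately show ?thesis by cases (simp_all, linarith+)
qed

lemma index_kron_pow_pauli_X:
  "kron_pow pauli_X k \<in> carrier_mat (2^k) (2^k) \<and>
   (\<forall>i<2^k. \<forall>j<2^k. kron_pow pauli_X k $$ (i,j) = (if i + j = 2^k - 1 then 1 else 0))"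
proof (induction k)
  case (Suc k)
  let ?K = "2^k :: nat" and ?X = "kron_pow pauli_X k"
  have X: "pauli_X \<in> carrier_mat 2 2" unfolding pauli_X_def by simp
  have "kron_pow pauli_X (Suc k) $$ (i,j) = (if i + j = 2^Suc k - 1 then 1 else 0)"
    if "i < 2^Suc k" "j < 2^Suc k" for i j
  proof -
    have div: "i div ?K < 2" "j div ?K < 2" using that by (simp_all add: less_mult_imp_div_less)
    have "kron_pow pauli_X (Suc k) $$ (i,j) = pauli_X $$ (i div ?K, j div ?K) * ?X $$ (i mod ?K, j mod ?K)"
      unfolding kron_pow.simps(2) using that Suc X by (subst index_kron) auto
    also have "\<dots> = (if i div ?K \<noteq> j div ?K then 1 else 0) * (if i mod ?K + j mod ?K = ?K - 1 then 1 else 0)"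
      using Suc div by (simp add: pauli_X_def)
    also have "\<dots> = (if i + j = 2 * ?K - 1 then 1 else 0)"
      using antidiagonal_double_iff[of i ?K j] that by auto
    finally show ?thesis by simp
  qed
  then show ?case using kron_carrier_mat[OF X, of ?X ?K ?K] Suc by simp
qed simp

lemma kron_pow_pauli_X_id:
  assumes "k \<le> w"
  shows "kron (kron_pow pauli_X k) (1\<^sub>m (2^(w-k))) = perm_mat (2^w) (compl_high (2^k) (2^(w-k)))"
proof (rule eq_matI)
  let ?K = "2^k :: nat" and ?L = "2^(w-k) :: nat"
  have X: "kron_pow pauli_X k \<in> carrier_mat ?K ?K" using index_kron_pow_pauli_X by blast
  fix i j assume "i < dim_row (perm_mat (2^w) (compl_high ?K ?L))" "j < dim_col (perm_mat (2^w) (compl_high ?K ?L))"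
  then have ij: "i < ?K * ?L" "j < ?K * ?L" using pow2_split[OF assms] by (auto simp: perm_mat_def)
  have "i div ?L < ?K" "j div ?L < ?K" using ij by (simp_all add: less_mult_imp_div_less)
  then have "kron (kron_pow pauli_X k) (1\<^sub>m ?L) $$ (i,j)
      = (if i div ?L + j div ?L = ?K - 1 \<and> i mod ?L = j mod ?L then 1 else 0)"
    using index_kron_id_right[OF X ij] index_kron_pow_pauli_X by auto
  also have "\<dots> = perm_mat (2^w) (compl_high ?K ?L) $$ (i,j)"
    using compl_high_iff[OF ij] ij pow2_split[OF assms] by (simp add: perm_mat_def)
  finally show "kron (kron_pow pauli_X k) (1\<^sub>m ?L) $$ (i,j) = perm_mat (2^w) (compl_high ?K ?L) $$ (i,j)" .
qed (use index_kron_pow_pauli_X[of k] pow2_split[OF assms] in \<open>auto simp: perm_mat_def\<close>)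

lemma block_X_Q:
  assumes "k \<le> w" "a < 2" "b < 2"
  shows "block (2^w) a b (X_Q w k)
    = (if a = b then perm_mat (2^w) (compl_high (2^k) (2^(w-k))) else 0\<^sub>m (2^w) (2^w))"
  unfolding X_Q_def kron_pow_pauli_X_id[OF assms(1)] using assms(2,3) by (simp add: block_kron_id2)

lemma kron_id2_carrier: "Q \<in> carrier_mat n n \<Longrightarrow> kron (1\<^sub>m 2) Q \<in> carrier_mat (2*n) (2*n)"
  using kron_carrier_mat[of "1\<^sub>m 2" 2 2 Q n n] by simp

definition inv_sqrt2 :: complex where
  "inv_sqrt2 = complex_of_real (1 / sqrt 2)"

lemma inv_sqrt2_square: "inv_sqrt2 * inv_sqrt2 = 1/2"
  unfolding inv_sqrt2_def by (simp flip: of_real_mult)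

text \<open>Each block of C^k(H) with respect to the O qubit is diagonal: its (a,b) block carries the
  Hadamard entry H_ab on basis states whose Q register is |1...1>, and \<delta>_ab elsewhere.\<close>
definition ckh_coeff :: "nat \<Rightarrow> nat \<Rightarrow> nat \<Rightarrow> nat \<Rightarrow> nat \<Rightarrow> complex" where
  "ckh_coeff w k a b i = (if i div 2^(w-k) = 2^k - 1
     then (if a = 1 \<and> b = 1 then - inv_sqrt2 else inv_sqrt2) else (if a = b then 1 else 0))"

lemma block_CkH:
  assumes "k \<le> w" "a < 2" "b < 2"
  shows "block (2^w) a b (CkH w k) = diag_fun (2^w) (ckh_coeff w k a b)"
proof (rule eq_matI)
  let ?K = "2^k :: nat" and ?L = "2^(w-k) :: nat" and ?N = "2^w :: nat"
  let ?P = "kron (proj_ones k) (1\<^sub>m ?L)" and ?P' = "kron (1\<^sub>m ?K - proj_ones k) (1\<^sub>m ?L)"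
  have P: "proj_ones k \<in> carrier_mat ?K ?K" and P': "1\<^sub>m ?K - proj_ones k \<in> carrier_mat ?K ?K"
    unfolding proj_ones_def by auto
  have H: "hadamard \<in> carrier_mat 2 2" unfolding hadamard_def by simp
  fix i j assume "i < dim_row (diag_fun ?N (ckh_coeff w k a b))" "j < dim_col (diag_fun ?N (ckh_coeff w k a b))"
  then have ij: "i < ?N" "j < ?N" by (auto simp: diag_fun_def)
  then have ij': "i < ?K * ?L" "j < ?K * ?L" using pow2_split[OF assms(1)] by auto
  have div: "i div ?L < ?K" "j div ?L < ?K" using ij' by (simp_all add: less_mult_imp_div_less)
  have same: "i div ?L = j div ?L \<and> i mod ?L = j mod ?L \<longleftrightarrow> i = j" by (metis div_mult_mod_eq)
  have "?P $$ (i,j) = (if i = j \<and> i div ?L = ?K - 1 then 1 else 0)"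
    using index_kron_id_right[OF P ij'] div same qbit_all_one_iff by (auto simp: proj_ones_def)
  moreover have "?P' $$ (i,j) = (if i = j \<and> i div ?L \<noteq> ?K - 1 then 1 else 0)"
    using index_kron_id_right[OF P' ij'] div same qbit_all_one_iff by (auto simp: proj_ones_def)
  moreover have PN: "?P \<in> carrier_mat ?N ?N" and P'N: "?P' \<in> carrier_mat ?N ?N"
    using kron_carrier_mat[OF P, of "1\<^sub>m ?L" ?L ?L] kron_carrier_mat[OF P', of "1\<^sub>m ?L" ?L ?L]
      pow2_split[OF assms(1)] by simp_all
  moreover have "CkH w k $$ (a*?N+i, b*?N+j)
      = kron hadamard ?P $$ (a*?N+i, b*?N+j) + kron (1\<^sub>m 2) ?P' $$ (a*?N+i, b*?N+j)"
    unfolding CkH_def using assms ij kron_id2_carrier[OF P'N]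
    by (intro index_add_mat(1))
      (auto simp: carrier_matD[OF P] pow2_split[OF assms(1)] intro: block_index_less)
  ultimately have "CkH w k $$ (a*?N+i, b*?N+j)
      = hadamard $$ (a,b) * (if i = j \<and> i div ?L = ?K - 1 then 1 else 0)
      + 1\<^sub>m 2 $$ (a,b) * (if i = j \<and> i div ?L \<noteq> ?K - 1 then 1 else 0)"
    using assms ij index_kron_block[OF H PN assms(2,3) ij] index_kron_block[OF _ P'N assms(2,3) ij, of "1\<^sub>m 2"]
    by simp
  then show "block ?N a b (CkH w k) $$ (i,j) = diag_fun ?N (ckh_coeff w k a b) $$ (i,j)"
    using assms ij by (auto simp: index_block index_diag_fun ckh_coeff_def hadamard_def inv_sqrt2_def)
qed auto

text \<open>Diagonal of the block of CZ where O is |a>; m indexes the remaining w qubits, so the first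
  qubit of Q is 1 iff m \<ge> 2^(w-1).\<close>
definition cz_phase :: "nat \<Rightarrow> nat \<Rightarrow> nat \<Rightarrow> complex" where
  "cz_phase w a m = (if a = 1 \<and> 2^(w-1) \<le> m then -1 else 1)"

lemma block_CZ:
  assumes "1 \<le> w" "a < 2" "b < 2"
  shows "block (2^w) a b (CZ_OQ1 w) = (if a = b then diag_fun (2^w) (cz_phase w a) else 0\<^sub>m (2^w) (2^w))"
proof (rule eq_matI)
  let ?N = "2^w :: nat"
  fix i j assume "i < dim_row (if a = b then diag_fun ?N (cz_phase w a) else 0\<^sub>m ?N ?N)"
    "j < dim_col (if a = b then diag_fun ?N (cz_phase w a) else 0\<^sub>m ?N ?N)"
  then have ij: "i < ?N" "j < ?N" by (auto simp: diag_fun_def split: if_splits)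
  have ai: "a*?N+i < 2^(w+1)" and bj: "b*?N+j < 2^(w+1)"
    using block_index_less[OF assms(2) ij(1)] block_index_less[OF assms(3) ij(2)] by simp_all
  have eq: "a*?N+i = b*?N+j \<longleftrightarrow> a = b \<and> i = j"
  proof
    assume e: "a*?N+i = b*?N+j"
    have "(a*?N+i) div ?N = a" "(a*?N+i) mod ?N = i" "(b*?N+j) div ?N = b" "(b*?N+j) mod ?N = j"
      using ij by simp_all
    then show "a = b \<and> i = j" unfolding e by simp
  qed simp
  have "block ?N a b (CZ_OQ1 w) $$ (i,j) = CZ_OQ1 w $$ (a*?N+i, b*?N+j)" by (rule index_block[OF ij])
  also have "\<dots> = (if a*?N+i = b*?N+j then
      (if qbit (w+1) (a*?N+i) 0 = 1 \<and> qbit (w+1) (a*?N+i) 1 = 1 then - 1 else 1) else 0)"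
    unfolding CZ_OQ1_def by (rule trans[OF index_mat(1)[OF ai bj]], simp only: prod.case)
  also have "\<dots> = (if a = b then diag_fun ?N (cz_phase w a) else 0\<^sub>m ?N ?N) $$ (i,j)"
    unfolding eq using qbit_upper_block[OF assms(1,2) ij(1)] ij
    by (auto simp: index_diag_fun cz_phase_def)
  finally show "block ?N a b (CZ_OQ1 w) $$ (i,j)
      = (if a = b then diag_fun ?N (cz_phase w a) else 0\<^sub>m ?N ?N) $$ (i,j)" .
qed (auto simp: diag_fun_def)

lemma CkH_carrier: "k \<le> w \<Longrightarrow> CkH w k \<in> carrier_mat (2*2^w) (2*2^w)"
  unfolding CkH_def carrier_mat_def by (simp add: pow2_split hadamard_def proj_ones_def)

lemma X_Q_carrier: "k \<le> w \<Longrightarrow> X_Q w k \<in> carrier_mat (2*2^w) (2*2^w)"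
  unfolding X_Q_def carrier_mat_def using index_kron_pow_pauli_X[of k] by (auto simp: pow2_split)

lemma CZ_OQ1_carrier: "CZ_OQ1 w \<in> carrier_mat (2*2^w) (2*2^w)"
  unfolding CZ_OQ1_def carrier_mat_def by simp

definition phase_conj :: "nat \<Rightarrow> complex mat \<Rightarrow> nat \<Rightarrow> complex mat" where
  "phase_conj w Q a = adj Q * diag_fun (2^w) (cz_phase w a) * Q"

lemma phase_conj_carrier:
  assumes "Q \<in> carrier_mat (2^w) (2^w)"
  shows "phase_conj w Q a \<in> carrier_mat (2^w) (2^w)"
  unfolding phase_conj_def
  using mult_carrier_mat[OF mult_carrier_mat[OF adj_carrier_mat[OF assms] diag_fun_carrier] assms] .

lemma compl_high_pow2_involution:
  assumes "k \<le> w" "l < 2^w"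
  shows "compl_high (2^k) (2^(w-k)) l < 2^w \<and> compl_high (2^k) (2^(w-k)) (compl_high (2^k) (2^(w-k)) l) = l"
  using compl_high_less[of l "2^k" "2^(w-k)"] compl_high_involutive[of l "2^k" "2^(w-k)"] assms
  by (simp add: pow2_split)

lemma block_CkH_mult_X_Q:
  assumes "k \<le> w" "a < 2" "b < 2"
  shows "block (2^w) a b (CkH w k * X_Q w k)
    = diag_fun (2^w) (ckh_coeff w k a b) * perm_mat (2^w) (compl_high (2^k) (2^(w-k)))"
  using block_mult_block_diag_right[OF CkH_carrier[OF assms(1)] X_Q_carrier[OF assms(1)] assms(2,3)]
    block_X_Q[OF assms(1)] assms(2,3) by (simp add: block_CkH[OF assms])

lemma block_X_Q_mult_CkH:
  assumes "k \<le> w" "a < 2" "b < 2"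
  shows "block (2^w) a b (X_Q w k * CkH w k)
    = perm_mat (2^w) (compl_high (2^k) (2^(w-k))) * diag_fun (2^w) (ckh_coeff w k a b)"
  using block_mult_block_diag_left[OF X_Q_carrier[OF assms(1)] CkH_carrier[OF assms(1)] assms(2,3)]
    block_X_Q[OF assms(1)] assms(2,3) by (simp add: block_CkH[OF assms])

lemma block_conj_CZ:
  assumes Q: "Q \<in> carrier_mat (2^w) (2^w)" and "1 \<le> w" "a < 2" "b < 2"
  shows "block (2^w) a b (kron (1\<^sub>m 2) (adj Q) * CZ_OQ1 w * kron (1\<^sub>m 2) Q)
    = (if a = b then phase_conj w Q a else 0\<^sub>m (2^w) (2^w))"
proof -
  let ?N = "2^w :: nat"
  have A: "kron (1\<^sub>m 2) (adj Q) \<in> carrier_mat (2*?N) (2*?N)"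
    by (rule kron_id2_carrier[OF adj_carrier_mat[OF Q]])
  have AZ: "kron (1\<^sub>m 2) (adj Q) * CZ_OQ1 w \<in> carrier_mat (2*?N) (2*?N)"
    using A CZ_OQ1_carrier by (rule mult_carrier_mat)
  have "block ?N a b (kron (1\<^sub>m 2) (adj Q) * CZ_OQ1 w)
      = (if a = b then adj Q * diag_fun ?N (cz_phase w a) else 0\<^sub>m ?N ?N)" if "a < 2" "b < 2" for a b
    using block_mult_block_diag_right[OF A CZ_OQ1_carrier that] that Q
    by (auto simp: block_CZ[OF assms(2)] block_kron_id2[OF adj_carrier_mat[OF Q]])
  then show ?thesis
    unfolding phase_conj_def
    using block_mult_block_diag_right[OF AZ kron_id2_carrier[OF Q] assms(3,4)] assms Q
    by (auto simp: block_kron_id2[OF Q])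
qed

text \<open>With respect to the O qubit, the upper-left block of R is
  D_00 P M_0 P D_00 + D_01 P M_1 P D_10, where D_ab are the diagonal blocks of C^k(H), P is the
  permutation by which X acts on Q, and M_a = Q^\<dagger> Z_a Q for the diagonal blocks Z_a of CZ.\<close>
lemma index_circuit_R:
  assumes Q: "Q \<in> carrier_mat (2^w) (2^w)" and k: "1 \<le> k" "k \<le> w" and ij: "i < 2^w" "j < 2^w"
  defines "\<sigma> \<equiv> compl_high (2^k) (2^(w-k))"
  shows "circuit_R w k Q $$ (i,j) =
      ckh_coeff w k 0 0 i * phase_conj w Q 0 $$ (\<sigma> i, \<sigma> j) * ckh_coeff w k 0 0 j
    + ckh_coeff w k 0 1 i * phase_conj w Q 1 $$ (\<sigma> i, \<sigma> j) * ckh_coeff w k 1 0 j"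
proof -
  let ?N = "2^w :: nat"
  define T where "T = CkH w k * X_Q w k"
  define W where "W = kron (1\<^sub>m 2) (adj Q) * CZ_OQ1 w * kron (1\<^sub>m 2) Q"
  define V where "V = X_Q w k * CkH w k"
  have A: "kron (1\<^sub>m 2) (adj Q) \<in> carrier_mat (2*?N) (2*?N)"
    by (rule kron_id2_carrier[OF adj_carrier_mat[OF Q]])
  have T: "T \<in> carrier_mat (2*?N) (2*?N)"
    unfolding T_def using CkH_carrier[OF k(2)] X_Q_carrier[OF k(2)] by (rule mult_carrier_mat)
  have AZ: "kron (1\<^sub>m 2) (adj Q) * CZ_OQ1 w \<in> carrier_mat (2*?N) (2*?N)"
    using A CZ_OQ1_carrier by (rule mult_carrier_mat)
  have W: "W \<in> carrier_mat (2*?N) (2*?N)"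
    unfolding W_def using AZ kron_id2_carrier[OF Q] by (rule mult_carrier_mat)
  have V: "V \<in> carrier_mat (2*?N) (2*?N)"
    unfolding V_def using X_Q_carrier[OF k(2)] CkH_carrier[OF k(2)] by (rule mult_carrier_mat)
  have "circuit_R w k Q = T * kron (1\<^sub>m 2) (adj Q) * CZ_OQ1 w * kron (1\<^sub>m 2) Q * V"
    unfolding circuit_R_def T_def V_def ..
  also have "\<dots> = (T * W) * V"
    unfolding W_def using assoc_mult_mat[OF T A CZ_OQ1_carrier] assoc_mult_mat[OF T AZ kron_id2_carrier[OF Q]]
    by simp
  finally have R: "circuit_R w k Q = (T * W) * V" .
  have W_diag: "block ?N a b W = (if a = b then phase_conj w Q a else 0\<^sub>m ?N ?N)" if "a < 2" "b < 2" for a b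
    unfolding W_def using block_conj_CZ[OF Q _ that] k by simp
  have TW: "block ?N a b (T * W)
      = diag_fun ?N (ckh_coeff w k a b) * perm_mat ?N \<sigma> * phase_conj w Q b" if "a < 2" "b < 2" for a b
    using block_mult_block_diag_right[OF T W that] W_diag that
    unfolding T_def \<sigma>_def by (simp add: block_CkH_mult_X_Q[OF k(2) that])
  have \<sigma>: "\<And>l. l < ?N \<Longrightarrow> \<sigma> l < ?N \<and> \<sigma> (\<sigma> l) = l"
    unfolding \<sigma>_def using compl_high_pow2_involution[OF k(2)] by blast
  have "circuit_R w k Q $$ (i,j) = block ?N 0 0 ((T * W) * V) $$ (i,j)"
    unfolding R using ij by (simp add: index_block)
  also have "\<dots> = (block ?N 0 0 (T * W) * block ?N 0 0 V) $$ (i,j)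
      + (block ?N 0 1 (T * W) * block ?N 1 0 V) $$ (i,j)"
    using block_mult[OF mult_carrier_mat[OF T W] V, of 0 0] ij by simp
  finally show ?thesis
    using index_diag_perm_conj[OF phase_conj_carrier[OF Q] ij \<sigma>] TW
    unfolding V_def \<sigma>_def by (simp add: block_X_Q_mult_CkH[OF k(2)])
qed

lemma phase_conj_zero:
  assumes "unitary (2^w) Q"
  shows "phase_conj w Q 0 = 1\<^sub>m (2^w)"
proof -
  have Q: "Q \<in> carrier_mat (2^w) (2^w)" and "adj Q * Q = 1\<^sub>m (2^w)"
    using assms unfolding unitary_def by simp_all
  moreover have "diag_fun (2^w) (cz_phase w 0) = 1\<^sub>m (2^w)"
    unfolding cz_phase_def by (simp add: diag_fun_one)
  ultimately show ?thesis unfolding phase_conj_def by (simp add: right_mult_one_mat[OF adj_carrier_mat[OF Q]])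
qed

text \<open>The compression \<Gamma>_rs = <r| Q^\<dagger> \<Pi>_acc Q |s> of the accepting projector.\<close>
definition accept_gram :: "nat \<Rightarrow> complex mat \<Rightarrow> nat \<Rightarrow> nat \<Rightarrow> complex" where
  "accept_gram w Q r s = (\<Sum>m<2^(w-1). cnj (Q $$ (m,r)) * Q $$ (m,s))"

definition accept_weight :: "nat \<Rightarrow> complex mat \<Rightarrow> nat \<Rightarrow> real" where
  "accept_weight w Q r = (\<Sum>m<2^(w-1). (cmod (Q $$ (m,r)))\<^sup>2)"

lemma index_phase_conj_one:
  assumes U: "unitary (2^w) Q" and rs: "r < 2^w" "s < 2^w"
  shows "phase_conj w Q 1 $$ (r,s) = 2 * accept_gram w Q r s - (if r = s then 1 else 0)"
proof -
  let ?N = "2^w :: nat" and ?h = "2^(w-1) :: nat"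
  have Q: "Q \<in> carrier_mat ?N ?N" using U unfolding unitary_def by simp
  have AD: "adj Q * diag_fun ?N (cz_phase w 1) \<in> carrier_mat ?N ?N"
    using mult_carrier_mat[OF adj_carrier_mat[OF Q] diag_fun_carrier] .
  have "phase_conj w Q 1 $$ (r,s)
      = (\<Sum>m<?N. (adj Q * diag_fun ?N (cz_phase w 1)) $$ (r,m) * Q $$ (m,s))"
    unfolding phase_conj_def using index_mult_mat_sum[OF AD Q rs] .
  also have "\<dots> = (\<Sum>m<?N. (2 * (if m < ?h then cnj (Q $$ (m,r)) * Q $$ (m,s) else 0))
      - cnj (Q $$ (m,r)) * Q $$ (m,s))"
    using rs by (intro sum.cong refl)
      (auto simp: index_mult_diag_fun[OF adj_carrier_mat[OF Q]] index_adj[OF Q] cz_phase_def)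
  also have "\<dots> = 2 * accept_gram w Q r s - (if r = s then 1 else 0)"
    unfolding sum_subtractf sum_distrib_left[symmetric] accept_gram_def
    using sum_lessThan_restrict[of ?h ?N] unitary_columns_orthonormal[OF U rs]
    by (simp add: power_increasing)
  finally show ?thesis .
qed

lemma circuit_R_entry_norm:
  assumes U: "unitary (2^w) Q" and k: "1 \<le> k" "k \<le> w" and il: "i < 2^w" "l < 2^w"
  shows "(cmod (circuit_R w k Q $$ (i,l)))\<^sup>2 =
    (if i div 2^(w-k) = 2^k - 1
     then (if l div 2^(w-k) = 2^k - 1
           then (cmod (accept_gram w Q (i mod 2^(w-k)) (l mod 2^(w-k))))\<^sup>2 else 0)
     else (if i = l then 1 else 0))"
proof -
  let ?\<sigma> = "compl_high (2^k) (2^(w-k))"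
  have Q: "Q \<in> carrier_mat (2^w) (2^w)" using U unfolding unitary_def by simp
  have \<sigma>: "?\<sigma> i < 2^w" "?\<sigma> l < 2^w" "?\<sigma> i = ?\<sigma> l \<longleftrightarrow> i = l"
    using compl_high_pow2_involution[OF k(2) il(1)] compl_high_pow2_involution[OF k(2) il(2)] by metis+
  have top: "?\<sigma> x = x mod 2^(w-k)" if "x div 2^(w-k) = 2^k - 1" for x
    using that unfolding compl_high_def by simp
  have "circuit_R w k Q $$ (i,l) =
      ckh_coeff w k 0 0 i * (if i = l then 1 else 0) * ckh_coeff w k 0 0 l
    + ckh_coeff w k 0 1 i * (2 * accept_gram w Q (?\<sigma> i) (?\<sigma> l) - (if i = l then 1 else 0))
      * ckh_coeff w k 1 0 l"
    using index_circuit_R[OF Q k il] index_phase_conj_one[OF U \<sigma>(1,2)] \<sigma>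
    unfolding phase_conj_zero[OF U] by simp
  moreover have half: "inv_sqrt2 * (inv_sqrt2 * (2 * z)) = z" for z
    unfolding mult.assoc[symmetric] inv_sqrt2_square by simp
  ultimately show ?thesis
    using top by (auto simp: ckh_coeff_def algebra_simps half)
qed

lemma trace_diag_conj_diag:
  assumes U: "U \<in> carrier_mat n n" and c: "Im c = 0"
  shows "Re (mtrace (mat n n (\<lambda>(x,y). if x = y \<and> P x then 1 else 0) * U
      * mat n n (\<lambda>(x,y). if x = y \<and> S x then c else 0) * adj U))
    = (\<Sum>i<n. \<Sum>l<n. if P i \<and> S l then Re c * (cmod (U $$ (i,l)))\<^sup>2 else 0)"
proof -
  have diag: "mat n n (\<lambda>(x,y). if x = y \<and> R x then e else 0) = diag_fun n (\<lambda>x. if R x then e else 0)"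
    for R and e :: complex by (rule eq_matI) (auto simp: diag_fun_def)
  let ?D1 = "diag_fun n (\<lambda>x. if P x then 1 else 0)" and ?D2 = "diag_fun n (\<lambda>x. if S x then c else 0)"
  have DUD: "?D1 * U * ?D2 \<in> carrier_mat n n"
    using U by (intro mult_carrier_mat[of _ n n]) simp_all
  have entry: "(?D1 * U * ?D2) $$ (i,l) = (if P i \<and> S l then c * U $$ (i,l) else 0)"
    if "i < n" "l < n" for i l
    using index_mult_diag_fun[OF mult_carrier_mat[OF diag_fun_carrier U] that]
      index_diag_fun_mult[OF U that] by simp
  have re_sq: "Re (if b then c * z * cnj z else 0) = (if b then Re c * (cmod z)\<^sup>2 else 0)" for b z
  proof -
    have "c * z * cnj z = c * complex_of_real ((cmod z)\<^sup>2)"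
      using complex_norm_square[of z] by (simp add: mult.assoc)
    moreover have "c = complex_of_real (Re c)" using c by (simp add: complex_eq_iff)
    ultimately have "Re (c * z * cnj z) = Re c * (cmod z)\<^sup>2" by (metis Re_complex_of_real of_real_mult)
    then show ?thesis by simp
  qed
  have "mtrace (?D1 * U * ?D2 * adj U) = (\<Sum>i<n. (?D1 * U * ?D2 * adj U) $$ (i,i))"
    unfolding mtrace_def using DUD by simp
  also have "\<dots> = (\<Sum>i<n. \<Sum>l<n. if P i \<and> S l then c * U $$ (i,l) * cnj (U $$ (i,l)) else 0)"
  proof (intro sum.cong refl)
    fix i assume "i \<in> {..<n}"
    then have i: "i < n" by simp
    show "(?D1 * U * ?D2 * adj U) $$ (i,i)
        = (\<Sum>l<n. if P i \<and> S l then c * U $$ (i,l) * cnj (U $$ (i,l)) else 0)"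
      unfolding index_mult_mat_sum[OF DUD adj_carrier_mat[OF U] i i]
      using i by (intro sum.cong refl) (simp add: entry index_adj[OF U] del: index_mult_mat)
  qed
  finally show ?thesis
    unfolding diag by (simp only: Re_sum re_sq)
qed

lemma p_acc_eq_accept_weight:
  assumes U: "unitary (2^w) Q" and k: "1 \<le> k" "k \<le> w"
  shows "p_acc w Q k = (\<Sum>r<2^(w-k). accept_weight w Q r) / 2^(w-k)"
proof -
  let ?N = "2^w :: nat" and ?L = "2^(w-k) :: nat" and ?h = "2^(w-1) :: nat"
  have Q: "Q \<in> carrier_mat ?N ?N" using U unfolding unitary_def by simp
  have "p_acc w Q k = (\<Sum>i<?N. \<Sum>l<?N. if qbit w i 0 = 0 \<and> (\<forall>j<k. qbit w l j = 0)
      then Re (1 / 2 ^ (w - k) :: complex) * (cmod (Q $$ (i,l)))\<^sup>2 else 0)"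
    unfolding p_acc_def Pi_acc_def rho_init_def by (rule trace_diag_conj_diag[OF Q]) simp
  also have "\<dots> = (\<Sum>i<?N. \<Sum>l<?N.
      if l < ?L then (if i < ?h then (cmod (Q $$ (i,l)))\<^sup>2 else 0) / ?L else 0)"
  proof (intro sum.cong refl)
    fix i l assume "i \<in> {..<?N}" "l \<in> {..<?N}"
    then have "qbit w i 0 = 0 \<longleftrightarrow> i < ?h" "(\<forall>j<k. qbit w l j = 0) \<longleftrightarrow> l < ?L"
      using qbit_prefix_zero_iff[of i w 1] qbit_prefix_zero_iff[of l w k] k by auto
    then show "(if qbit w i 0 = 0 \<and> (\<forall>j<k. qbit w l j = 0)
        then Re (1 / 2 ^ (w - k) :: complex) * (cmod (Q $$ (i,l)))\<^sup>2 else 0)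
      = (if l < ?L then (if i < ?h then (cmod (Q $$ (i,l)))\<^sup>2 else 0) / ?L else 0)"
      by simp
  qed
  also have "\<dots> = (\<Sum>l<?N. \<Sum>i<?N.
      if l < ?L then (if i < ?h then (cmod (Q $$ (i,l)))\<^sup>2 else 0) / ?L else 0)"
    by (rule sum.swap)
  also have "\<dots> = (\<Sum>l<?N. if l < ?L then accept_weight w Q l / ?L else 0)"
    unfolding accept_weight_def
    by (intro sum.cong refl) (simp add: sum_divide_distrib[symmetric] sum_lessThan_restrict power_increasing)
  also have "\<dots> = (\<Sum>r<?L. accept_weight w Q r) / ?L"
    by (simp add: sum_lessThan_restrict power_increasing sum_divide_distrib)
  finally show ?thesis by simp
qed

lemma p_acc_circuit_R:
  assumes U: "unitary (2^w) Q" and "k \<le> w"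
  shows "p_acc (w+1) (circuit_R w k Q) 1
    = (\<Sum>i<2^w. \<Sum>l<2^w. (cmod (circuit_R w k Q $$ (i,l)))\<^sup>2) / 2^w"
proof -
  let ?R = "circuit_R w k Q" and ?N = "2^w :: nat" and ?M = "2^(w+1) :: nat"
  have Q: "Q \<in> carrier_mat ?N ?N" using U unfolding unitary_def by simp
  have "?R \<in> carrier_mat (2*?N) (2*?N)"
    unfolding circuit_R_def using CkH_carrier[OF assms(2)] X_Q_carrier[OF assms(2)] CZ_OQ1_carrier
      kron_id2_carrier[OF Q] kron_id2_carrier[OF adj_carrier_mat[OF Q]]
    by (intro mult_carrier_mat) auto
  then have R: "?R \<in> carrier_mat ?M ?M" by simp
  have "p_acc (w+1) ?R 1 = (\<Sum>i<?M. \<Sum>l<?M. if qbit (w+1) i 0 = 0 \<and> (\<forall>j<1. qbit (w+1) l j = 0)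
      then Re (1 / 2 ^ (w + 1 - 1) :: complex) * (cmod (?R $$ (i,l)))\<^sup>2 else 0)"
    unfolding p_acc_def Pi_acc_def rho_init_def by (rule trace_diag_conj_diag[OF R]) simp
  also have "\<dots> = (\<Sum>i<?M. if i < ?N
      then (\<Sum>l<?M. if l < ?N then (cmod (?R $$ (i,l)))\<^sup>2 / 2^w else 0) else 0)"
    using qbit_first_zero_iff by (intro sum.cong refl) (auto intro!: sum.cong)
  also have "\<dots> = (\<Sum>i<?N. \<Sum>l<?N. (cmod (?R $$ (i,l)))\<^sup>2) / 2^w"
    by (simp add: sum_lessThan_restrict sum_divide_distrib)
  finally show ?thesis .
qed

lemma sum_top_block:
  fixes F :: "nat \<Rightarrow> 'a::comm_monoid_add"
  assumes "K > 0"
  shows "(\<Sum>l<K*L. if l div L = K - 1 then F (l mod L) else 0) = (\<Sum>r<L. F r)"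
proof -
  let ?g = "\<lambda>l. if l div L = K - 1 then F (l mod L) else 0"
  have KL: "K*L = (K-1)*L + L" using assms by (cases K) auto
  have "(\<Sum>l<K*L. ?g l) = (\<Sum>l\<in>{0..<(K-1)*L}. ?g l) + (\<Sum>l\<in>{(K-1)*L..<K*L}. ?g l)"
    using KL by (simp add: lessThan_atLeast0 sum.atLeastLessThan_concat)
  also have "(\<Sum>l\<in>{0..<(K-1)*L}. ?g l) = 0"
    by (intro sum.neutral ballI) (auto dest: less_mult_imp_div_less)
  also have "(\<Sum>l\<in>{(K-1)*L..<K*L}. ?g l) = (\<Sum>r\<in>{0..<L}. ?g (r + (K-1)*L))"
    using sum.shift_bounds_nat_ivl[of ?g 0 "(K-1)*L" L] KL by (simp add: add.commute)
  also have "\<dots> = (\<Sum>r\<in>{0..<L}. F r)"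
    by (intro sum.cong refl) simp
  finally show ?thesis by (simp add: lessThan_atLeast0)
qed

lemma circuit_R_frobenius:
  assumes U: "unitary (2^w) Q" and k: "1 \<le> k" "k \<le> w"
  shows "(\<Sum>i<2^w. \<Sum>l<2^w. (cmod (circuit_R w k Q $$ (i,l)))\<^sup>2)
    = (2^w - 2^(w-k)) + (\<Sum>r<2^(w-k). \<Sum>s<2^(w-k). (cmod (accept_gram w Q r s))\<^sup>2)"
proof -
  let ?N = "2^w :: nat" and ?K = "2^k :: nat" and ?L = "2^(w-k) :: nat"
  let ?top = "\<lambda>x. x div ?L = ?K - 1"
  let ?H = "\<lambda>r. \<Sum>s<?L. (cmod (accept_gram w Q r s))\<^sup>2"
  have N: "?N = ?K * ?L" using pow2_split[OF k(2)] by simp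
  have row: "(\<Sum>l<?N. (cmod (circuit_R w k Q $$ (i,l)))\<^sup>2) = (if ?top i then ?H (i mod ?L) else 1)"
    if "i < ?N" for i
  proof -
    have "(\<Sum>l<?N. (cmod (circuit_R w k Q $$ (i,l)))\<^sup>2) = (\<Sum>l<?N.
        if ?top i then (if ?top l then (cmod (accept_gram w Q (i mod ?L) (l mod ?L)))\<^sup>2 else 0)
        else (if i = l then 1 else 0))"
      by (intro sum.cong refl) (simp add: circuit_R_entry_norm[OF U k that])
    also have "\<dots> = (if ?top i then ?H (i mod ?L) else 1)"
      using sum_top_block[of ?K ?L "\<lambda>s. (cmod (accept_gram w Q (i mod ?L) s))\<^sup>2"] that
      by (simp add: N)
    finally show ?thesis .
  qed
  have "(\<Sum>i<?N. \<Sum>l<?N. (cmod (circuit_R w k Q $$ (i,l)))\<^sup>2)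
      = (\<Sum>i<?N. (if ?top i then ?H (i mod ?L) else 0) + (1 - (if ?top i then 1 else 0)))"
    by (intro sum.cong refl) (simp add: row)
  also have "\<dots> = (\<Sum>r<?L. ?H r) + (real ?N - (\<Sum>r<?L. 1))"
    unfolding sum.distrib sum_subtractf N
    using sum_top_block[of ?K ?L ?H] sum_top_block[of ?K ?L "\<lambda>_. 1::real"] by simp
  finally show ?thesis by simp
qed

lemma accept_gram_diag: "accept_gram w Q r r = complex_of_real (accept_weight w Q r)"
  unfolding accept_gram_def accept_weight_def of_real_sum
  by (intro sum.cong refl) (simp add: complex_norm_square mult.commute del: of_real_power)

text \<open>\<Gamma> is itself a projection, so \<Gamma>^2 = \<Gamma> read on the diagonal.\<close>
lemma accept_gram_row_norm:
  assumes U: "unitary (2^w) Q" and r: "r < 2^w"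
  shows "(\<Sum>s<2^w. (cmod (accept_gram w Q r s))\<^sup>2) = accept_weight w Q r"
proof -
  let ?N = "2^w :: nat" and ?h = "2^(w-1) :: nat"
  have h: "?h \<le> ?N" by (simp add: power_increasing)
  let ?a = "\<lambda>m. cnj (Q $$ (m,r))"
  have "complex_of_real (\<Sum>s<?N. (cmod (accept_gram w Q r s))\<^sup>2)
      = (\<Sum>s<?N. accept_gram w Q r s * cnj (accept_gram w Q r s))"
    unfolding of_real_sum by (intro sum.cong refl) (simp add: complex_norm_square del: of_real_power)
  also have "\<dots> = (\<Sum>s<?N. \<Sum>m<?h. \<Sum>m'<?h. ?a m * cnj (?a m') * (Q $$ (m,s) * cnj (Q $$ (m',s))))"
    unfolding accept_gram_def cnj_sum sum_product by (simp add: algebra_simps)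
  also have "\<dots> = (\<Sum>m<?h. \<Sum>m'<?h. ?a m * cnj (?a m') * (\<Sum>s<?N. Q $$ (m,s) * cnj (Q $$ (m',s))))"
    unfolding sum_distrib_left by (subst sum.swap) (simp add: sum.swap[of _ "{..<?N}"])
  also have "\<dots> = (\<Sum>m<?h. \<Sum>m'<?h. ?a m * cnj (?a m') * (if m = m' then 1 else 0))"
  proof (intro sum.cong refl)
    fix m m' assume "m \<in> {..<?h}" "m' \<in> {..<?h}"
    then have "m < ?N" "m' < ?N" using h by (meson lessThan_iff less_le_trans)+
    then show "?a m * cnj (?a m') * (\<Sum>s<?N. Q $$ (m,s) * cnj (Q $$ (m',s)))
        = ?a m * cnj (?a m') * (if m = m' then 1 else 0)"
      by (simp add: unitary_rows_orthonormal[OF U])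
  qed
  also have "\<dots> = (\<Sum>m<?h. ?a m * cnj (?a m))"
    by (intro sum.cong refl) (simp add: if_distrib[of "(*) _"] cong: if_cong)
  also have "\<dots> = complex_of_real (accept_weight w Q r)"
    unfolding accept_weight_def of_real_sum
    by (intro sum.cong refl) (simp add: complex_norm_square del: of_real_power)
  finally show ?thesis by (simp only: of_real_eq_iff)
qed

lemma accept_gram_frobenius_bounds:
  assumes U: "unitary (2^w) Q" and L: "L \<le> 2^w"
  shows "(\<Sum>r<L. (accept_weight w Q r)\<^sup>2) \<le> (\<Sum>r<L. \<Sum>s<L. (cmod (accept_gram w Q r s))\<^sup>2)"
    and "(\<Sum>r<L. \<Sum>s<L. (cmod (accept_gram w Q r s))\<^sup>2) \<le> (\<Sum>r<L. accept_weight w Q r)"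
proof -
  show "(\<Sum>r<L. (accept_weight w Q r)\<^sup>2) \<le> (\<Sum>r<L. \<Sum>s<L. (cmod (accept_gram w Q r s))\<^sup>2)"
  proof (rule sum_mono)
    fix r assume "r \<in> {..<L}"
    then have "(cmod (accept_gram w Q r r))\<^sup>2 \<le> (\<Sum>s<L. (cmod (accept_gram w Q r s))\<^sup>2)"
      by (intro member_le_sum) auto
    then show "(accept_weight w Q r)\<^sup>2 \<le> (\<Sum>s<L. (cmod (accept_gram w Q r s))\<^sup>2)"
      by (simp add: accept_gram_diag)
  qed
  show "(\<Sum>r<L. \<Sum>s<L. (cmod (accept_gram w Q r s))\<^sup>2) \<le> (\<Sum>r<L. accept_weight w Q r)"
  proof (rule sum_mono)
    fix r assume "r \<in> {..<L}"
    then have "(\<Sum>s<L. (cmod (accept_gram w Q r s))\<^sup>2) \<le> (\<Sum>s<2^w. (cmod (accept_gram w Q r s))\<^sup>2)"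
      using L by (intro sum_mono2) auto
    then show "(\<Sum>s<L. (cmod (accept_gram w Q r s))\<^sup>2) \<le> accept_weight w Q r"
      using accept_gram_row_norm[OF U] \<open>r \<in> {..<L}\<close> L by simp
  qed
qed

lemma acceptance_bounds:
  fixes K L N S A B p pR :: real
  assumes K: "K > 0" and L: "L > 0" and N: "N = K * L"
    and pR: "pR = (N - L + S) / N" and p: "p = A / L"
    and BS: "B \<le> S" and SA: "S \<le> A" and AB: "A\<^sup>2 \<le> L * B"
  shows "1 - (1 - p\<^sup>2) / K \<le> pR \<and> pR \<le> 1 - (1 - p) / K"
proof -
  have pR': "pR = 1 - 1 / K + S / (K * L)" unfolding pR N using K L by (simp add: field_simps)
  have "A\<^sup>2 \<le> L * S" using AB mult_left_mono[OF BS, of L] L by linarith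
  then have "A\<^sup>2 / L \<le> S" using L by (simp add: field_simps)
  then have "1 - (1 - p\<^sup>2) / K \<le> pR"
    unfolding pR' p using K L by (simp add: field_simps power2_eq_square divide_right_mono)
  moreover have "pR \<le> 1 - (1 - p) / K"
    unfolding pR' p using SA K L by (simp add: field_simps divide_right_mono)
  ultimately show ?thesis by simp
qed

theorem proposition11:
  fixes w k :: nat and Q :: "complex mat"
  assumes "unitary (2^w) Q" and "1 \<le> k" and "k \<le> w"
  shows "1 - (1 - (p_acc w Q k)\<^sup>2) / 2 ^ k \<le> p_acc (w+1) (circuit_R w k Q) 1
       \<and> p_acc (w+1) (circuit_R w k Q) 1 \<le> 1 - (1 - p_acc w Q k) / 2 ^ k"
proof -
  let ?N = "2^w :: nat" and ?L = "2^(w-k) :: nat"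
  let ?A = "\<Sum>r<?L. accept_weight w Q r" and ?B = "\<Sum>r<?L. (accept_weight w Q r)\<^sup>2"
    and ?S = "\<Sum>r<?L. \<Sum>s<?L. (cmod (accept_gram w Q r s))\<^sup>2"
  have LN: "?L \<le> ?N" by (simp add: power_increasing)
  have N: "real ?N = 2^k * real ?L" using pow2_split[OF assms(3)] by (metis of_nat_mult of_nat_numeral of_nat_power)
  have "p_acc (w+1) (circuit_R w k Q) 1 = (real ?N - real ?L + ?S) / real ?N"
    using p_acc_circuit_R[OF assms(1,3)] circuit_R_frobenius[OF assms] LN by (simp add: of_nat_diff)
  moreover have "p_acc w Q k = ?A / real ?L"
    using p_acc_eq_accept_weight[OF assms] by simp
  moreover have "?A\<^sup>2 \<le> real ?L * ?B"
    using sum_squared_le_sum_of_squares[of "accept_weight w Q" "{..<?L}"] by (simp add: mult.commute)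
  ultimately show ?thesis
    using acceptance_bounds[OF _ _ N] accept_gram_frobenius_bounds[OF assms(1) LN] by simp
qed

end
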